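(* Let $p,q\in(0,1/2)$ with $\frac{\log p}{\log q}\notin\mathbb Q$. Then for any $r>0$ and any finite word $\mathbf i\in I^*$, $$\lim_{t\to+\infty}\Delta_{[0,r]}\big(t(K_{pq}-S_{\mathbf i}(0))\big)=\lim_{t\to+\infty}\Delta_{[-r,0]}\big(t(K_{pq}-S_{\mathbf i}(1))\big)=0.$$
   Context: For $p,q\in(0,1/2)$ let $S_1(x)=px$, $S_2(x)=qx$, $S_3(x)=px+1-p$, $S_4(x)=qx+1-q$, and let $K_{pq}$ be the attractor of $\{S_1,S_2,S_3,S_4\}$ (the unique nonempty compact $K\subset\mathbb R$ with $K=\bigcup_{i=1}^4S_i(K)$). $I=\{1,2,3,4\}$, $I^*=\bigcup_{n\ge1}I^n$ is the set of finite words, and for $\mathbf i=i_1\dots i_n$, $S_{\mathbf i}=S_{i_1}\circ\cdots\circ S_{i_n}$. For a set $X\subset\mathbb R$ and $s\in\mathbb R$, $X-s=\{x-s:x\in X\}$ and $tX=\{tx:x\in X\}$. For $a<b$ and compact $X\subset\mathbb R$, $\Delta_{[a,b]}(X)=d_H(X\cap[a,b],[a,b])$, where $d_H$ is the Hausdorff distance. *)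

theory Defs
  imports "HOL-Analysis.Analysis"
begin

text \<open>The four similarity maps S_1,...,S_4 (indices outside 1..4 are irrelevant).\<close>
definition Smap :: "real \<Rightarrow> real \<Rightarrow> nat \<Rightarrow> real \<Rightarrow> real" where
  "Smap p q i x =
     (if i = 1 then p * x
      else if i = 2 then q * x
      else if i = 3 then p * x + 1 - p
      else q * x + 1 - q)"

definition Kpq :: "real \<Rightarrow> real \<Rightarrow> real set" where
  "Kpq p q = (THE K. K \<noteq> {} \<and> compact K \<and> K = (\<Union>i\<in>{1..4}. Smap p q i ` K))"

definition words :: "nat list set" where
  "words = {w. w \<noteq> [] \<and> set w \<subseteq> {1..4}}"

definition Sword :: "real \<Rightarrow> real \<Rightarrow> nat list \<Rightarrow> real \<Rightarrow> real" where
  "Sword p q w = foldr (\<lambda>i f. Smap p q i \<circ> f) w id"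

definition translate_set :: "real set \<Rightarrow> real \<Rightarrow> real set" where
  "translate_set X s = (\<lambda>x. x - s) ` X"

definition scale_set :: "real \<Rightarrow> real set \<Rightarrow> real set" where
  "scale_set t X = (\<lambda>x. t * x) ` X"

definition hausdorff_dist :: "real set \<Rightarrow> real set \<Rightarrow> real" where
  "hausdorff_dist A B = max (SUP x\<in>A. infdist x B) (SUP y\<in>B. infdist y A)"

definition Delta :: "real \<Rightarrow> real \<Rightarrow> real set \<Rightarrow> real" where
  "Delta a b X = hausdorff_dist (X \<inter> {a..b}) {a..b}"

end

theory Submission
  imports Defs
begin

text \<open>
  The points \<open>p^a q^b\<close> and \<open>1 - p^a q^b\<close> lie in \<open>K\<^sub>p\<^sub>q\<close>. Since \<open>log p / log q\<close> is irrational,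
  Kronecker's theorem makes the sums \<open>a (-log p) + b (-log q)\<close> asymptotically \<open>\<eta>\<close>-dense in the
  half line, so for large \<open>t\<close> the numbers \<open>t c p^a q^b\<close> are \<open>\<epsilon>\<close>-dense in \<open>[0,r]\<close>. As \<open>S\<^sub>w\<close> is
  affine with some slope \<open>c > 0\<close>, \<open>S\<^sub>w(p^a q^b) - S\<^sub>w(0) = c p^a q^b\<close> and
  \<open>S\<^sub>w(1 - p^a q^b) - S\<^sub>w(1) = -c p^a q^b\<close>, where both points lie in \<open>K\<^sub>p\<^sub>q\<close> because
  it is invariant under \<open>S\<^sub>w\<close>.
\<close>

section \<open>Sums of two incommensurable numbers\<close>

lemma irrational_ratio_small_combination:
  fixes \<alpha> \<beta> \<eta> :: real
  assumes "\<alpha> > 0" "\<beta> > 0" "\<alpha> / \<beta> \<notin> \<rat>" "\<eta> > 0"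
  shows "\<exists>n f :: nat. 0 < real n * \<alpha> - real f * \<beta> \<and> real n * \<alpha> - real f * \<beta> < \<eta>"
proof -
  define \<theta> where "\<theta> = \<alpha> / \<beta>"
  obtain n :: nat where "n > 0" and n: "frac (real n * \<theta>) < \<eta> / \<beta>"
    using Kronecker_approx_1_explicit[of \<theta> 0 "\<eta> / \<beta>"] assms by (auto simp: \<theta>_def)
  have "frac (real n * \<theta>) \<noteq> 0"
  proof
    assume "frac (real n * \<theta>) = 0"
    then obtain z where "real n * \<theta> = of_int z" by (auto simp: frac_eq_0_iff elim: Ints_cases)
    then have "\<theta> = of_int z / real n" using \<open>n > 0\<close> by (simp add: field_simps)
    then show False using assms(3) by (simp add: \<theta>_def)
  qed
  then have frac_pos: "frac (real n * \<theta>) > 0" using frac_ge_0[of "real n * \<theta>"] by linarith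
  define f where "f = nat \<lfloor>real n * \<theta>\<rfloor>"
  have "real f = of_int \<lfloor>real n * \<theta>\<rfloor>" using assms(1,2) by (simp add: f_def \<theta>_def)
  then have "real n * \<alpha> - real f * \<beta> = \<beta> * frac (real n * \<theta>)"
    using assms(2) by (simp add: frac_def \<theta>_def field_simps)
  then show ?thesis using frac_pos n assms(2) by (intro exI[of _ n] exI[of _ f]) (auto simp: field_simps)
qed

text \<open>
  Write \<open>u = B + k \<alpha> + v\<close> with \<open>B = J f \<beta>\<close> and \<open>0 \<le> v < \<alpha>\<close>; trading \<open>j \<le> J\<close> copies of \<open>f \<beta>\<close>
  for \<open>j n \<alpha>\<close> raises the sum in steps of \<open>g = n \<alpha> - f \<beta> < \<eta>\<close>.
\<close>
lemma irrational_ratio_combinations_dense: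
  fixes \<alpha> \<beta> \<eta> :: real
  assumes \<alpha>: "\<alpha> > 0" and \<beta>: "\<beta> > 0" and irr: "\<alpha> / \<beta> \<notin> \<rat>" and \<eta>: "\<eta> > 0"
  shows "eventually (\<lambda>u. \<exists>a b :: nat. u \<le> real a * \<alpha> + real b * \<beta> \<and>
                                      real a * \<alpha> + real b * \<beta> \<le> u + \<eta>) at_top"
proof -
  obtain n f :: nat where g: "0 < real n * \<alpha> - real f * \<beta>" "real n * \<alpha> - real f * \<beta> < \<eta>"
    using irrational_ratio_small_combination[OF assms] by blast
  define g where "g = real n * \<alpha> - real f * \<beta>"
  define J where "J = nat \<lceil>\<alpha> / g\<rceil>"
  define B where "B = real J * real f * \<beta>"
  show ?thesis unfolding eventually_at_top_linorder
  proof (intro exI[of _ B] allI impI)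
    fix u assume "u \<ge> B"
    define k where "k = nat \<lfloor>(u - B) / \<alpha>\<rfloor>"
    have "real k = of_int \<lfloor>(u - B) / \<alpha>\<rfloor>" using \<open>u \<ge> B\<close> \<alpha> by (simp add: k_def)
    then have "real k \<le> (u - B) / \<alpha>" "(u - B) / \<alpha> < real k + 1" by linarith+
    define v where "v = u - B - real k * \<alpha>"
    have v: "0 \<le> v" "v < \<alpha>"
      using \<open>real k \<le> _\<close> \<open>_ < real k + 1\<close> \<alpha> by (auto simp: v_def field_simps)
    define j where "j = nat \<lceil>v / g\<rceil>"
    have "real j = of_int \<lceil>v / g\<rceil>" using v g by (simp add: j_def g_def)
    then have "v / g \<le> real j" "real j < v / g + 1" by linarith+
    then have j: "v \<le> real j * g" "real j * g < v + g" using g by (auto simp: g_def field_simps)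
    have "j \<le> J"
      unfolding j_def J_def using v g by (intro nat_mono ceiling_mono divide_right_mono) (auto simp: g_def)
    have "real (j * n + k) * \<alpha> + real ((J - j) * f) * \<beta> = u + (real j * g - v)"
      using \<open>j \<le> J\<close> by (simp add: v_def B_def g_def of_nat_diff algebra_simps)
    then show "\<exists>a b :: nat. u \<le> real a * \<alpha> + real b * \<beta> \<and> real a * \<alpha> + real b * \<beta> \<le> u + \<eta>"
      using j g by (intro exI[of _ "j * n + k"] exI[of _ "(J - j) * f"]) (auto simp: g_def)
  qed
qed

lemma scaled_power_products_dense:
  fixes p q c r \<epsilon> :: real
  assumes p: "0 < p" "p < 1" and q: "0 < q" "q < 1" and irr: "ln p / ln q \<notin> \<rat>"
    and c: "c > 0" and r: "r > 0" and \<epsilon>: "\<epsilon> > 0"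
  shows "eventually (\<lambda>t. \<forall>y\<in>{0<..r}. \<exists>a b :: nat.
                             y - \<epsilon> \<le> t * c * (p^a * q^b) \<and> t * c * (p^a * q^b) \<le> y) at_top"
proof -
  define \<eta> where "\<eta> = \<epsilon> / r"
  have "\<eta> > 0" using \<epsilon> r by (simp add: \<eta>_def)
  have "- ln p > 0" "- ln q > 0" "(- ln p) / (- ln q) \<notin> \<rat>" using p q irr by simp_all
  from irrational_ratio_combinations_dense[OF this \<open>\<eta> > 0\<close>] obtain M where M:
    "\<And>u. u \<ge> M \<Longrightarrow> \<exists>a b :: nat. u \<le> real a * (- ln p) + real b * (- ln q) \<and>
                                  real a * (- ln p) + real b * (- ln q) \<le> u + \<eta>"
    unfolding eventually_at_top_linorder by blast
  show ?thesis unfolding eventually_at_top_linorder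
  proof (intro exI[of _ "r * exp M / c"] allI impI ballI)
    fix t y assume t: "t \<ge> r * exp M / c" and "y \<in> {0<..r}"
    then have y: "0 < y" "y \<le> r" by auto
    have "t > 0" using t r c by (smt (verit) divide_pos_pos exp_gt_zero mult_pos_pos)
    have "exp M \<le> t * c / r" using t c r by (simp add: field_simps)
    also have "\<dots> \<le> t * c / y" using \<open>t > 0\<close> c y by (intro divide_left_mono) auto
    finally have "M \<le> ln (t * c / y)" using \<open>t > 0\<close> c y by (simp add: ln_ge_iff)
    then obtain a b :: nat where ab: "ln (t * c / y) \<le> real a * (- ln p) + real b * (- ln q)"
      "real a * (- ln p) + real b * (- ln q) \<le> ln (t * c / y) + \<eta>" using M by blast
    define l where "l = real a * (- ln p) + real b * (- ln q)"
    have pq_exp: "p^a * q^b = exp (- l)"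
      using p q by (simp add: l_def exp_add exp_diff exp_of_nat_mult)
    have tcy: "t * c * exp (- ln (t * c / y)) = y" using \<open>t > 0\<close> c y by (simp add: exp_minus)
    have "t * c * exp (- l) \<le> t * c * exp (- ln (t * c / y))"
      using ab(1) \<open>t > 0\<close> c by (simp add: l_def)
    then have "t * c * (p^a * q^b) \<le> y" using tcy by (simp add: pq_exp)
    moreover have "y * exp (- \<eta>) \<le> t * c * (p^a * q^b)"
    proof -
      have "y * exp (- \<eta>) = t * c * exp (- ln (t * c / y) - \<eta>)"
        using tcy by (simp add: exp_diff exp_minus field_simps)
      also have "\<dots> \<le> t * c * exp (- l)" using ab(2) \<open>t > 0\<close> c by (simp add: l_def)
      finally show ?thesis by (simp add: pq_exp)
    qed
    moreover have "y - \<epsilon> \<le> y * exp (- \<eta>)"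
    proof -
      have "y * (1 - \<eta>) \<le> y * exp (- \<eta>)"
        using exp_ge_add_one_self[of "- \<eta>"] y by (intro mult_left_mono) auto
      moreover have "y * \<eta> \<le> r * \<eta>" using y \<open>\<eta> > 0\<close> by (intro mult_right_mono) auto
      moreover have "r * \<eta> = \<epsilon>" using r by (simp add: \<eta>_def)
      ultimately show ?thesis by (simp add: algebra_simps)
    qed
    ultimately show "\<exists>a b :: nat. y - \<epsilon> \<le> t * c * (p^a * q^b) \<and> t * c * (p^a * q^b) \<le> y"
      by (intro exI[of _ a] exI[of _ b]) auto
  qed
qed

text \<open>The case \<open>y = 0\<close> is covered by a point near \<open>min \<epsilon> r\<close>.\<close>
lemma scaled_power_products_dense_closed:
  fixes p q c r \<epsilon> :: real
  assumes "0 < p" "p < 1" "0 < q" "q < 1" "ln p / ln q \<notin> \<rat>" "c > 0" "r > 0" "\<epsilon> > 0"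
  shows "eventually (\<lambda>t. \<forall>y\<in>{0..r}. \<exists>a b :: nat. 0 \<le> t * c * (p^a * q^b) \<and>
           t * c * (p^a * q^b) \<le> r \<and> \<bar>y - t * c * (p^a * q^b)\<bar> \<le> \<epsilon>) at_top"
  using eventually_conj[OF eventually_gt_at_top[of 0] scaled_power_products_dense[OF assms]]
proof (rule eventually_mono, intro ballI)
  fix t y assume t: "0 < t \<and> (\<forall>y\<in>{0<..r}. \<exists>a b :: nat.
                         y - \<epsilon> \<le> t * c * (p^a * q^b) \<and> t * c * (p^a * q^b) \<le> y)"
    and y: "y \<in> {0..r}"
  define y' where "y' = (if y = 0 then min \<epsilon> r else y)"
  have "y' \<in> {0<..r}" using y assms by (auto simp: y'_def)
  then obtain a b :: nat where "y' - \<epsilon> \<le> t * c * (p^a * q^b)" "t * c * (p^a * q^b) \<le> y'"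
    using t by blast
  moreover have "0 \<le> t * c * (p^a * q^b)" using t assms by simp
  ultimately show "\<exists>a b :: nat. 0 \<le> t * c * (p^a * q^b) \<and>
           t * c * (p^a * q^b) \<le> r \<and> \<bar>y - t * c * (p^a * q^b)\<bar> \<le> \<epsilon>"
    using y \<open>y' \<in> {0<..r}\<close> by (intro exI[of _ a] exI[of _ b]) (auto simp: y'_def split: if_splits)
qed

section \<open>The similarity maps and the attractor\<close>

lemma Smap_affine: "Smap p q i x = (if i = 1 \<or> i = 3 then p else q) * x + Smap p q i 0"
  by (simp add: Smap_def)

lemma continuous_on_Smap: "continuous_on S (Smap p q i)"
proof -
  have eq: "Smap p q i = (\<lambda>x. (if i = 1 \<or> i = 3 then p else q) * x + Smap p q i 0)"
    using Smap_affine by blast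
  show ?thesis by (subst eq) (intro continuous_intros)
qed

lemma Smap_atLeastAtMost:
  assumes "0 < p" "p < 1" "0 < q" "q < 1" "x \<in> {0..1}"
  shows "Smap p q i x \<in> {0..1}"
proof -
  have "0 \<le> p * x" "p * x \<le> p" "0 \<le> q * x" "q * x \<le> q"
    using assms by (auto intro: mult_left_le_one_le mult_right_le_one_le)
  then show ?thesis unfolding Smap_def using assms by (smt (verit) atLeastAtMost_iff)
qed

lemma Sword_Nil [simp]: "Sword p q [] x = x"
  by (simp add: Sword_def)

lemma Sword_Cons [simp]: "Sword p q (i # w) x = Smap p q i (Sword p q w x)"
  by (simp add: Sword_def)

lemma Sword_atLeastAtMost:
  "0 < p \<Longrightarrow> p < 1 \<Longrightarrow> 0 < q \<Longrightarrow> q < 1 \<Longrightarrow> x \<in> {0..1} \<Longrightarrow> Sword p q w x \<in> {0..1}"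
  by (induction w) (auto simp del: atLeastAtMost_iff intro: Smap_atLeastAtMost)

lemma Sword_affine:
  assumes "0 < p" "0 < q"
  shows "\<exists>c. 0 < c \<and> c \<le> max p q ^ length w \<and> (\<forall>x. Sword p q w x = c * x + Sword p q w 0)"
proof (induction w)
  case Nil
  show ?case by (intro exI[of _ 1]) auto
next
  case (Cons i w)
  then obtain c where c: "0 < c" "c \<le> max p q ^ length w" "\<forall>x. Sword p q w x = c * x + Sword p q w 0"
    by blast
  define \<rho> where "\<rho> = (if i = 1 \<or> i = 3 then p else q)"
  have \<rho>: "0 < \<rho>" "\<rho> \<le> max p q" using assms by (auto simp: \<rho>_def)
  have Sx: "Sword p q (i # w) x = \<rho> * (c * x + Sword p q w 0) + Smap p q i 0" for x
    using c(3)[rule_format, of x] by (simp add: Smap_def \<rho>_def)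
  have affine: "Sword p q (i # w) x = (\<rho> * c) * x + Sword p q (i # w) 0" for x
    unfolding Sx[of x] Sx[of 0] by (simp add: algebra_simps)
  have slope: "\<rho> * c \<le> max p q ^ length (i # w)"
    unfolding length_Cons power_Suc using \<rho> c(1) by (intro mult_mono[OF \<rho>(2) c(2)]) auto
  show ?case by (intro exI[of _ "\<rho> * c"] conjI allI mult_pos_pos \<rho>(1) c(1) slope affine)
qed

definition is_attractor :: "real \<Rightarrow> real \<Rightarrow> real set \<Rightarrow> bool" where
  "is_attractor p q K \<longleftrightarrow> K \<noteq> {} \<and> compact K \<and> K = (\<Union>i\<in>{1..4}. Smap p q i ` K)"

definition orbit0 :: "real \<Rightarrow> real \<Rightarrow> real set" where
  "orbit0 p q = {Sword p q w 0 | w. set w \<subseteq> {1..4}}"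

lemma is_attractor_Smap_mem: "is_attractor p q K \<Longrightarrow> i \<in> {1..4} \<Longrightarrow> x \<in> K \<Longrightarrow> Smap p q i x \<in> K"
  unfolding is_attractor_def by blast

lemma is_attractor_Sword_mem:
  "is_attractor p q K \<Longrightarrow> set w \<subseteq> {1..4} \<Longrightarrow> x \<in> K \<Longrightarrow> Sword p q w x \<in> K"
  by (induction w) (auto intro: is_attractor_Smap_mem)

lemma closed_contains_limit_of_iterates:
  assumes "closed K" "f ` K \<subseteq> K" "x \<in> K" "(\<lambda>n. (f ^^ n) x) \<longlonglongrightarrow> l"
  shows "l \<in> K"
proof -
  have "(f ^^ n) x \<in> K" for n
    by (induction n) (use assms(2,3) in auto)
  then show ?thesis using closed_sequentially[OF assms(1) _ assms(4)] by blast
qed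

lemma funpow_Smap_1: "(Smap p q 1 ^^ n) x = p^n * x"
  by (induction n) (auto simp: Smap_def)

lemma funpow_Smap_3: "(Smap p q 3 ^^ n) x = 1 - p^n * (1 - x)"
proof (induction n)
  case (Suc n)
  have "Smap p q 3 (1 - p^n * (1 - x)) = 1 - p^Suc n * (1 - x)" by (simp add: Smap_def algebra_simps)
  with Suc show ?case by simp
qed simp

text \<open>\<open>0\<close> and \<open>1\<close> are the fixed points of \<open>S\<^sub>1\<close> and \<open>S\<^sub>3\<close>.\<close>
lemma is_attractor_0_1:
  assumes K: "is_attractor p q K" and p: "0 < p" "p < 1"
  shows "0 \<in> K" "1 \<in> K"
proof -
  obtain x where "x \<in> K" using K by (auto simp: is_attractor_def)
  have "closed K" using K by (auto simp: is_attractor_def compact_imp_closed)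
  have "Smap p q 1 ` K \<subseteq> K" "Smap p q 3 ` K \<subseteq> K" using K by (auto intro: is_attractor_Smap_mem)
  have pn: "(\<lambda>n. p^n) \<longlonglongrightarrow> 0" using p by (intro LIMSEQ_power_zero) auto
  have "(\<lambda>n. p^n * x) \<longlonglongrightarrow> 0 * x" by (intro tendsto_intros pn)
  then have "(\<lambda>n. (Smap p q 1 ^^ n) x) \<longlonglongrightarrow> 0" unfolding funpow_Smap_1 by simp
  then show "0 \<in> K"
    by (rule closed_contains_limit_of_iterates[OF \<open>closed K\<close> \<open>Smap p q 1 ` K \<subseteq> K\<close> \<open>x \<in> K\<close>])
  have "(\<lambda>n. 1 - p^n * (1 - x)) \<longlonglongrightarrow> 1 - 0 * (1 - x)" by (intro tendsto_intros pn)
  then have "(\<lambda>n. (Smap p q 3 ^^ n) x) \<longlonglongrightarrow> 1" unfolding funpow_Smap_3 by simp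
  then show "1 \<in> K"
    by (rule closed_contains_limit_of_iterates[OF \<open>closed K\<close> \<open>Smap p q 3 ` K \<subseteq> K\<close> \<open>x \<in> K\<close>])
qed

lemma is_attractor_power_products:
  assumes K: "is_attractor p q K" and "0 < p" "p < 1"
  shows "p^a * q^b \<in> K" "1 - p^a * q^b \<in> K"
proof -
  have "q^b \<in> K \<and> 1 - q^b \<in> K"
  proof (induction b)
    case 0
    show ?case using is_attractor_0_1[OF assms] by simp
  next
    case (Suc b)
    then have "Smap p q 2 (q^b) \<in> K" "Smap p q 4 (1 - q^b) \<in> K"
      using K by (auto intro: is_attractor_Smap_mem)
    then show ?case by (simp add: Smap_def algebra_simps)
  qed
  then have "p^a * q^b \<in> K \<and> 1 - p^a * q^b \<in> K"
  proof (induction a)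
    case (Suc a)
    then have "Smap p q 1 (p^a * q^b) \<in> K" "Smap p q 3 (1 - p^a * q^b) \<in> K"
      using K by (auto intro: is_attractor_Smap_mem)
    then show ?case by (simp add: Smap_def algebra_simps)
  qed simp
  then show "p^a * q^b \<in> K" "1 - p^a * q^b \<in> K" by auto
qed

text \<open>Every point of \<open>K\<close> is \<open>S\<^sub>w(y)\<close> with \<open>y \<in> K\<close> and \<open>|w| = n\<close>, hence within \<open>max p q ^ n \<cdot> sup |K|\<close> of \<open>S\<^sub>w(0)\<close>.\<close>
lemma is_attractor_eq_closure_orbit0:
  assumes K: "is_attractor p q K" and p: "0 < p" "p < 1" and q: "0 < q" "q < 1"
  shows "K = closure (orbit0 p q)"
proof
  have "orbit0 p q \<subseteq> K"
    using is_attractor_Sword_mem[OF K _ is_attractor_0_1(1)[OF K p]] by (auto simp: orbit0_def)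
  then show "closure (orbit0 p q) \<subseteq> K"
    using K by (intro closure_minimal) (auto simp: is_attractor_def compact_imp_closed)
next
  have split: "\<forall>x\<in>K. \<exists>w y. length w = n \<and> set w \<subseteq> {1..4} \<and> y \<in> K \<and> x = Sword p q w y" for n
  proof (induction n)
    case 0
    show ?case by (intro ballI exI[of _ "[]"]) auto
  next
    case (Suc n)
    show ?case
    proof
      fix x assume "x \<in> K"
      then obtain i y where i: "i \<in> {1..4}" "y \<in> K" "x = Smap p q i y"
        using K unfolding is_attractor_def by blast
      with Suc obtain w z where "length w = n" "set w \<subseteq> {1..4}" "z \<in> K" "y = Sword p q w z"
        by blast
      with i show "\<exists>w y. length w = Suc n \<and> set w \<subseteq> {1..4} \<and> y \<in> K \<and> x = Sword p q w y"
        by (intro exI[of _ "i # w"] exI[of _ z]) auto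
    qed
  qed
  obtain B where B: "B > 0" "\<forall>x\<in>K. \<bar>x\<bar> \<le> B"
    using K compact_imp_bounded[of K] by (auto simp: is_attractor_def bounded_pos)
  show "K \<subseteq> closure (orbit0 p q)"
  proof
    fix x assume "x \<in> K"
    show "x \<in> closure (orbit0 p q)"
      unfolding closure_approachable
    proof (intro allI impI)
      fix e :: real assume "e > 0"
      have "max p q < 1" "0 < max p q" using p q by auto
      then obtain n where n: "max p q ^ n < e / B"
        using real_arch_pow_inv[of "e / B" "max p q"] \<open>e > 0\<close> B by auto
      obtain w y where w: "length w = n" "set w \<subseteq> {1..4}" "y \<in> K" "x = Sword p q w y"
        using split \<open>x \<in> K\<close> by blast
      obtain c where c: "0 < c" "c \<le> max p q ^ n" "\<forall>x. Sword p q w x = c * x + Sword p q w 0"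
        using Sword_affine[of p q w] p q w(1) by blast
      have "dist (Sword p q w 0) x = c * \<bar>y\<bar>"
        using c(1) c(3)[rule_format, of y] w(4) by (simp add: dist_real_def abs_mult)
      also have "\<dots> \<le> max p q ^ n * B" using c(1,2) w(3) B by (intro mult_mono) auto
      also have "\<dots> < e" using n B by (simp add: field_simps)
      finally show "\<exists>y\<in>orbit0 p q. dist y x < e" using w(2) by (auto simp: orbit0_def)
    qed
  qed
qed

lemma is_attractor_closure_orbit0:
  assumes p: "0 < p" "p < 1" and q: "0 < q" "q < 1"
  shows "is_attractor p q (closure (orbit0 p q))"
proof -
  let ?C = "closure (orbit0 p q)"
  have "0 \<in> orbit0 p q" unfolding orbit0_def by (auto intro!: exI[of _ "[]"])
  have "orbit0 p q \<subseteq> {0..1}" using Sword_atLeastAtMost[OF p q] by (auto simp: orbit0_def)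
  then have "compact ?C"
    by (meson bounded_closure bounded_subset closed_closure compact_Icc compact_eq_bounded_closed)
  have sub: "Smap p q i ` ?C \<subseteq> ?C" if i: "i \<in> {1..4}" for i
  proof (rule image_closure_subset[OF continuous_on_Smap closed_closure])
    have "Smap p q i (Sword p q w 0) \<in> orbit0 p q" if "set w \<subseteq> {1..4}" for w
      using that i unfolding orbit0_def by (intro CollectI exI[of _ "i # w"]) auto
    then have "Smap p q i ` orbit0 p q \<subseteq> orbit0 p q" by (auto simp: orbit0_def)
    then show "Smap p q i ` orbit0 p q \<subseteq> ?C" using closure_subset by blast
  qed
  have sup: "?C \<subseteq> (\<Union>i\<in>{1..4}. Smap p q i ` ?C)"
  proof (rule closure_minimal)
    show "closed (\<Union>i\<in>{1..4}. Smap p q i ` ?C)"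
      by (intro compact_imp_closed compact_UN finite_atLeastAtMost
          compact_continuous_image continuous_on_Smap \<open>compact ?C\<close>)
    show "orbit0 p q \<subseteq> (\<Union>i\<in>{1..4}. Smap p q i ` ?C)"
    proof
      fix z assume "z \<in> orbit0 p q"
      then obtain w where w: "set w \<subseteq> {1..4}" "z = Sword p q w 0" by (auto simp: orbit0_def)
      show "z \<in> (\<Union>i\<in>{1..4}. Smap p q i ` ?C)"
      proof (cases w)
        case Nil
        then have "z = Smap p q 1 0" using w by (simp add: Smap_def)
        then show ?thesis using \<open>0 \<in> orbit0 p q\<close> closure_subset by fastforce
      next
        case (Cons i w')
        then have "Sword p q w' 0 \<in> ?C" using w closure_subset unfolding orbit0_def by fastforce
        then show ?thesis using w Cons by auto
      qed
    qed
  qed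
  have eq: "?C = (\<Union>i\<in>{1..4}. Smap p q i ` ?C)"
    by (rule equalityI[OF sup UN_least[OF sub]])
  have ne: "?C \<noteq> {}" using \<open>0 \<in> orbit0 p q\<close> closure_subset by blast
  show ?thesis unfolding is_attractor_def by (rule conjI[OF ne conjI[OF \<open>compact ?C\<close> eq]])
qed

lemma is_attractor_Kpq:
  assumes "0 < p" "p < 1" "0 < q" "q < 1"
  shows "is_attractor p q (Kpq p q)"
proof -
  have "Kpq p q = closure (orbit0 p q)"
    unfolding Kpq_def
  proof (rule the_equality)
    fix K assume "K \<noteq> {} \<and> compact K \<and> K = (\<Union>i\<in>{1..4}. Smap p q i ` K)"
    then have "is_attractor p q K" unfolding is_attractor_def .
    then show "K = closure (orbit0 p q)" by (rule is_attractor_eq_closure_orbit0[OF _ assms])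
  qed (fact is_attractor_closure_orbit0[OF assms, unfolded is_attractor_def])
  then show ?thesis using is_attractor_closure_orbit0[OF assms] by (simp only:)
qed

section \<open>Blow-ups of the attractor\<close>

lemma Delta_le:
  fixes a b \<epsilon> :: real
  assumes "a \<le> b" "\<epsilon> \<ge> 0" and near: "\<forall>y\<in>{a..b}. \<exists>z\<in>X. a \<le> z \<and> z \<le> b \<and> \<bar>y - z\<bar> \<le> \<epsilon>"
  shows "0 \<le> Delta a b X \<and> Delta a b X \<le> \<epsilon>"
proof -
  let ?Y = "X \<inter> {a..b}"
  have "?Y \<noteq> {}" using near assms(1) by fastforce
  then have "(SUP x\<in>?Y. infdist x {a..b}) = 0" by (simp add: infdist_zero)
  moreover have "(SUP y\<in>{a..b}. infdist y ?Y) \<le> \<epsilon>"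
  proof (rule cSUP_least)
    fix y assume "y \<in> {a..b}"
    then obtain z where z: "z \<in> X" "a \<le> z" "z \<le> b" "\<bar>y - z\<bar> \<le> \<epsilon>" using near by blast
    then have "infdist y ?Y \<le> dist y z" by (intro infdist_le) auto
    then show "infdist y ?Y \<le> \<epsilon>" using z(4) by (simp add: dist_real_def)
  qed (use assms(1) in simp)
  ultimately show ?thesis unfolding Delta_def hausdorff_dist_def using assms(2) by auto
qed

lemma Delta_tendsto_0:
  fixes a b :: real and X :: "real \<Rightarrow> real set"
  assumes "a \<le> b"
    and near: "\<And>\<epsilon>. \<epsilon> > 0 \<Longrightarrow>
      eventually (\<lambda>t. \<forall>y\<in>{a..b}. \<exists>z\<in>X t. a \<le> z \<and> z \<le> b \<and> \<bar>y - z\<bar> \<le> \<epsilon>) at_top"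
  shows "((\<lambda>t. Delta a b (X t)) \<longlongrightarrow> 0) at_top"
proof (rule tendstoI)
  fix \<epsilon> :: real assume "\<epsilon> > 0"
  have "\<epsilon> / 2 > 0" using \<open>\<epsilon> > 0\<close> by simp
  from near[OF this] have "eventually (\<lambda>t. 0 \<le> Delta a b (X t) \<and> Delta a b (X t) \<le> \<epsilon> / 2) at_top"
  proof (rule eventually_mono)
    fix t assume near_t: "\<forall>y\<in>{a..b}. \<exists>z\<in>X t. a \<le> z \<and> z \<le> b \<and> \<bar>y - z\<bar> \<le> \<epsilon> / 2"
    show "0 \<le> Delta a b (X t) \<and> Delta a b (X t) \<le> \<epsilon> / 2"
      using Delta_le[OF \<open>a \<le> b\<close> _ near_t] \<open>\<epsilon> / 2 > 0\<close> by simp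
  qed
  then show "eventually (\<lambda>t. dist (Delta a b (X t)) 0 < \<epsilon>) at_top"
    by (rule eventually_mono) (use \<open>\<epsilon> > 0\<close> in \<open>auto simp: dist_real_def\<close>)
qed

lemma mem_scale_translate_set: "x \<in> K \<Longrightarrow> t * (x - s) \<in> scale_set t (translate_set K s)"
  unfolding scale_set_def translate_set_def by (intro imageI)

lemma Delta_blowup_Kpq_right:
  assumes pq: "0 < p" "p < 1" "0 < q" "q < 1" and irr: "ln p / ln q \<notin> \<rat>"
    and "r > 0" and w: "set w \<subseteq> {1..4}"
  shows "((\<lambda>t. Delta 0 r (scale_set t (translate_set (Kpq p q) (Sword p q w 0)))) \<longlongrightarrow> 0) at_top"
proof (rule Delta_tendsto_0)
  fix \<epsilon> :: real assume "\<epsilon> > 0"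
  obtain c where c: "0 < c" "\<forall>x. Sword p q w x = c * x + Sword p q w 0"
    using Sword_affine[of p q w] pq by blast
  have K: "is_attractor p q (Kpq p q)" using is_attractor_Kpq[OF pq] .
  have "t * c * (p^a * q^b) \<in> scale_set t (translate_set (Kpq p q) (Sword p q w 0))" for t a b
  proof -
    have "Sword p q w (p^a * q^b) \<in> Kpq p q"
      using is_attractor_Sword_mem[OF K w is_attractor_power_products(1)[OF K pq(1,2)]] .
    moreover have "t * (Sword p q w (p^a * q^b) - Sword p q w 0) = t * c * (p^a * q^b)"
      using c(2)[rule_format, of "p^a * q^b"] by simp
    ultimately show ?thesis using mem_scale_translate_set by metis
  qed
  then show "eventually (\<lambda>t. \<forall>y\<in>{0..r}. \<exists>z\<in>scale_set t (translate_set (Kpq p q) (Sword p q w 0)).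
                 0 \<le> z \<and> z \<le> r \<and> \<bar>y - z\<bar> \<le> \<epsilon>) at_top"
    using scaled_power_products_dense_closed[OF pq irr c(1) \<open>r > 0\<close> \<open>\<epsilon> > 0\<close>]
    by (elim eventually_mono) blast
qed (use \<open>r > 0\<close> in simp)

lemma Delta_blowup_Kpq_left:
  assumes pq: "0 < p" "p < 1" "0 < q" "q < 1" and irr: "ln p / ln q \<notin> \<rat>"
    and "r > 0" and w: "set w \<subseteq> {1..4}"
  shows "((\<lambda>t. Delta (-r) 0 (scale_set t (translate_set (Kpq p q) (Sword p q w 1)))) \<longlongrightarrow> 0) at_top"
proof (rule Delta_tendsto_0)
  fix \<epsilon> :: real assume "\<epsilon> > 0"
  obtain c where c: "0 < c" "\<forall>x. Sword p q w x = c * x + Sword p q w 0"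
    using Sword_affine[of p q w] pq by blast
  have K: "is_attractor p q (Kpq p q)" using is_attractor_Kpq[OF pq] .
  have mem: "- (t * c * (p^a * q^b)) \<in> scale_set t (translate_set (Kpq p q) (Sword p q w 1))" for t a b
  proof -
    have "Sword p q w (1 - p^a * q^b) \<in> Kpq p q"
      using is_attractor_Sword_mem[OF K w is_attractor_power_products(2)[OF K pq(1,2)]] .
    moreover have "t * (Sword p q w (1 - p^a * q^b) - Sword p q w 1) = - (t * c * (p^a * q^b))"
      unfolding c(2)[rule_format, of "1 - p^a * q^b"] c(2)[rule_format, of 1] by (simp add: algebra_simps)
    ultimately show ?thesis using mem_scale_translate_set by metis
  qed
  show "eventually (\<lambda>t. \<forall>y\<in>{-r..0}. \<exists>z\<in>scale_set t (translate_set (Kpq p q) (Sword p q w 1)).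
                 -r \<le> z \<and> z \<le> 0 \<and> \<bar>y - z\<bar> \<le> \<epsilon>) at_top"
    using scaled_power_products_dense_closed[OF pq irr c(1) \<open>r > 0\<close> \<open>\<epsilon> > 0\<close>]
  proof (rule eventually_mono, intro ballI)
    fix t y assume dense: "\<forall>y\<in>{0..r}. \<exists>a b :: nat. 0 \<le> t * c * (p^a * q^b) \<and>
                             t * c * (p^a * q^b) \<le> r \<and> \<bar>y - t * c * (p^a * q^b)\<bar> \<le> \<epsilon>"
      and "y \<in> {-r..0}"
    then obtain a b :: nat where "0 \<le> t * c * (p^a * q^b)" "t * c * (p^a * q^b) \<le> r"
      "\<bar>- y - t * c * (p^a * q^b)\<bar> \<le> \<epsilon>" by fastforce
    then show "\<exists>z\<in>scale_set t (translate_set (Kpq p q) (Sword p q w 1)). -r \<le> z \<and> z \<le> 0 \<and> \<bar>y - z\<bar> \<le> \<epsilon>"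
      using mem[of t a b] \<open>y \<in> {-r..0}\<close> by (intro bexI[of _ "- (t * c * (p^a * q^b))"]) auto
  qed
qed (use \<open>r > 0\<close> in simp)

theorem corollary8:
  fixes p q r :: real and w :: "nat list"
  assumes "0 < p" "p < 1/2" "0 < q" "q < 1/2"
    and "ln p / ln q \<notin> \<rat>"
    and "r > 0"
    and "w \<in> words"
  shows "((\<lambda>t. Delta 0 r (scale_set t (translate_set (Kpq p q) (Sword p q w 0)))) \<longlongrightarrow> 0) at_top \<and>
         ((\<lambda>t. Delta (-r) 0 (scale_set t (translate_set (Kpq p q) (Sword p q w 1)))) \<longlongrightarrow> 0) at_top"
proof -
  have pq: "0 < p" "p < 1" "0 < q" "q < 1" using assms(1-4) by auto
  have "set w \<subseteq> {1..4}" using assms(7) by (simp add: words_def)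
  then show ?thesis
    using Delta_blowup_Kpq_right[OF pq assms(5,6)] Delta_blowup_Kpq_left[OF pq assms(5,6)] by blast
qed

end
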